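(* Let $p>3$ be a prime, let $G=\mathbb{Z}/p\mathbb{Z}$, and let $U=u_1u_2u_3$ and $V=v_1v_2v_3$ be sequences over $G$ each consisting of three distinct elements. Let $U\cdot V=\{\sum_{i=1}^3 u_i v_{\sigma(i)} : \sigma \text{ a permutation of } \{1,2,3\}\}\subseteq G$. Then $|U\cdot V|\geq 4$. Furthermore, if $p>7$ and $|U\cdot V|=4$, then $U\cdot V$ is not an arithmetic progression, and either both $\{u_1,u_2,u_3\}$ and $\{v_1,v_2,v_3\}$ are arithmetic progressions, or else there exist affine transformations $\varphi,\psi$ of $G$ (maps $z\mapsto \alpha z+\beta$ with $\alpha,\beta\in G$, $\alpha\neq 0$) such that $\varphi(\{u_1,u_2,u_3\})=\{0,1,x\}$ and $\psi(\{v_1,v_2,v_3\})=\{0,1,y\}$, where $x$ and $y$ are the two distinct roots of $z^2-z+1$ in $\mathbb{Z}/p\mathbb{Z}$.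
   Context: A subset $A\subseteq \mathbb{Z}/p\mathbb{Z}$ is an arithmetic progression if $A=\{a,a+d,\ldots,a+(k-1)d\}$ for some $a\in \mathbb{Z}/p\mathbb{Z}$, some nonzero $d$ (the difference), and $k=|A|$. Multiplication is that of the ring $\mathbb{Z}/p\mathbb{Z}$. *)

theory Defs
  imports "HOL-Combinatorics.Permutations" "HOL-Computational_Algebra.Primes"
begin

text \<open>Z/pZ is modelled by the integers 0..p-1 with arithmetic taken mod p.\<close>

definition residues_set :: "int \<Rightarrow> int set" where
  "residues_set p = {0..<p}"

definition seq_prod_set :: "int \<Rightarrow> (nat \<Rightarrow> int) \<Rightarrow> (nat \<Rightarrow> int) \<Rightarrow> int set" where
  "seq_prod_set p u v =
     {(\<Sum>i\<in>{1,2,3}. u i * v (\<sigma> i)) mod p | \<sigma>. \<sigma> permutes {1,2,3::nat}}"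

definition is_AP_mod :: "int \<Rightarrow> int set \<Rightarrow> bool" where
  "is_AP_mod p A \<longleftrightarrow> (\<exists>a d. d mod p \<noteq> 0 \<and> A = {(a + int i * d) mod p | i. i < card A})"

definition affine_mod :: "int \<Rightarrow> int \<Rightarrow> int \<Rightarrow> int \<Rightarrow> int" where
  "affine_mod p \<alpha> \<beta> z = (\<alpha> * z + \<beta>) mod p"

end

theory Submission
  imports Defs "HOL-Number_Theory.Cong"
begin

text \<open>
  Split the six sums \<Sum>i u_i v_\<sigma>(i) into the three even ones (\<sigma> cyclic) and the three odd
  ones. An even and an odd sum differ by a product (u_i - u_j)(v_k - v_l), so modulo p the two
  classes are disjoint and |U\<cdot>V| is the number of distinct even residues plus the number of
  distinct odd residues. If all even (or all odd) sums coincide, both triples are equilateral,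
  i.e. affine images of {0, 1, x} with x^2 - x + 1 = 0; if each class contains a coincidence,
  each triple contains the midpoint of its other two elements. For p > 3 the two shapes are
  incompatible, which gives |U\<cdot>V| \<ge> 4 and shows that |U\<cdot>V| = 4 leaves only these two shapes.
  In both cases U\<cdot>V is not an arithmetic progression: its centred power sums of degree 2 and 4
  do not match those of a four-term progression, 80 d^2 and 2624 d^4, unless p \<le> 7.
\<close>

definition pairwise_incongruent :: "int \<Rightarrow> int \<Rightarrow> int \<Rightarrow> int \<Rightarrow> bool" where
  "pairwise_incongruent p a b c \<longleftrightarrow> \<not> p dvd (a - b) \<and> \<not> p dvd (a - c) \<and> \<not> p dvd (b - c)"

definition all_congruent :: "int \<Rightarrow> int \<Rightarrow> int \<Rightarrow> int \<Rightarrow> bool" where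
  "all_congruent p a b c \<longleftrightarrow> p dvd (a - b) \<and> p dvd (a - c)"

definition has_midpoint :: "int \<Rightarrow> int \<Rightarrow> int \<Rightarrow> int \<Rightarrow> bool" where
  "has_midpoint p a b c \<longleftrightarrow> p dvd (2*a - b - c) \<or> p dvd (2*b - a - c) \<or> p dvd (2*c - a - b)"

text \<open>
  If b - c is invertible mod p, the form below is (b - c)^2 (x^2 - x + 1) with
  x = (a - c) / (b - c), so it vanishes iff {a, b, c} is an affine image of {0, 1, x}
  with x^2 - x + 1 = 0.
\<close>
definition equilateral :: "int \<Rightarrow> int \<Rightarrow> int \<Rightarrow> int \<Rightarrow> bool" where
  "equilateral p a b c \<longleftrightarrow> p dvd (a^2 + b^2 + c^2 - a*b - b*c - c*a)"

lemma pairwise_incongruent_swap23: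
  "pairwise_incongruent p a c b \<longleftrightarrow> pairwise_incongruent p a b c"
  unfolding pairwise_incongruent_def by (auto simp: dvd_diff_commute)

lemma pairwise_incongruent_residues:
  fixes p a b c :: int
  assumes "a \<in> residues_set p" "b \<in> residues_set p" "c \<in> residues_set p" "a \<noteq> b" "a \<noteq> c" "b \<noteq> c"
  shows "pairwise_incongruent p a b c"
  using assms by (auto simp: pairwise_incongruent_def residues_set_def mod_eq_dvd_iff[symmetric])

lemma not_dvd_pairwise_differences:
  "prime p \<Longrightarrow> pairwise_incongruent p a b c \<Longrightarrow> \<not> p dvd (a - b) * (a - c) * (b - c)"
  by (simp add: pairwise_incongruent_def prime_dvd_mult_iff)

lemma prime_not_dvd_3:
  fixes p :: int
  shows "p > 3 \<Longrightarrow> \<not> p dvd 3"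
  by (simp add: zdvd_not_zless)

lemma not_midpoint_if_equilateral:
  fixes p a b c :: int
  assumes "prime p" "p > 3" "pairwise_incongruent p a b c" "equilateral p a b c"
  shows "\<not> has_midpoint p a b c"
proof
  assume "has_midpoint p a b c"
  moreover have "p dvd 3 * (b - c)^2" if "p dvd (2*a - b - c)"
    using that assms(4) unfolding equilateral_def by algebra
  moreover have "p dvd 3 * (a - c)^2" if "p dvd (2*b - a - c)"
    using that assms(4) unfolding equilateral_def by algebra
  moreover have "p dvd 3 * (a - b)^2" if "p dvd (2*c - a - b)"
    using that assms(4) unfolding equilateral_def by algebra
  ultimately show False
    using assms(1-3) prime_not_dvd_3
    by (auto simp: has_midpoint_def pairwise_incongruent_def prime_dvd_mult_iff prime_dvd_power_iff)
qed

definition perm_sums :: "int \<Rightarrow> int \<Rightarrow> int \<Rightarrow> int \<Rightarrow> int \<Rightarrow> int \<Rightarrow> int set" where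
  "perm_sums u1 u2 u3 v1 v2 v3 =
     {u1*v1 + u2*v2 + u3*v3, u1*v2 + u2*v3 + u3*v1, u1*v3 + u2*v1 + u3*v2,
      u1*v1 + u2*v3 + u3*v2, u1*v3 + u2*v2 + u3*v1, u1*v2 + u2*v1 + u3*v3}"

lemma perm_sums_commute: "perm_sums v1 v2 v3 u1 u2 u3 = perm_sums u1 u2 u3 v1 v2 v3"
  unfolding perm_sums_def by (auto simp: ac_simps)

lemma perm_sums_swap:
  "perm_sums u1 u2 u3 v1 v3 v2 = perm_sums u1 u2 u3 v1 v2 v3"
  "perm_sums u3 u2 u1 v1 v2 v3 = perm_sums u1 u2 u3 v1 v2 v3"
  "perm_sums u1 u3 u2 v1 v2 v3 = perm_sums u1 u2 u3 v1 v2 v3"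
  unfolding perm_sums_def by (auto simp: ac_simps)

lemma even_odd_sums_incongruent:
  fixes p u1 u2 u3 v1 v2 v3 e f :: int
  assumes "prime p" "pairwise_incongruent p u1 u2 u3" "pairwise_incongruent p v1 v2 v3"
    and "e \<in> {u1*v1 + u2*v2 + u3*v3, u1*v2 + u2*v3 + u3*v1, u1*v3 + u2*v1 + u3*v2}"
    and "f \<in> {u1*v1 + u2*v3 + u3*v2, u1*v3 + u2*v2 + u3*v1, u1*v2 + u2*v1 + u3*v3}"
  shows "\<not> p dvd (e - f)"
proof
  assume "p dvd (e - f)"
  with assms(4,5) have "p dvd (u1 - u2) * (u1 - u3) * (u2 - u3) * ((v1 - v2) * (v1 - v3) * (v2 - v3))"
    by (elim insertE emptyE) algebra+
  with assms(1-3) show False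
    using not_dvd_pairwise_differences by (simp add: prime_dvd_mult_iff)
qed

lemma equilateral_if_even_sums_congruent:
  fixes p u1 u2 u3 v1 v2 v3 :: int
  assumes "prime p" "pairwise_incongruent p u1 u2 u3" "pairwise_incongruent p v1 v2 v3"
    and "all_congruent p (u1*v1 + u2*v2 + u3*v3) (u1*v2 + u2*v3 + u3*v1) (u1*v3 + u2*v1 + u3*v2)"
  shows "equilateral p u1 u2 u3 \<and> equilateral p v1 v2 v3"
proof -
  have "p dvd (v1 - v2) * (u1^2 + u2^2 + u3^2 - u1*u2 - u2*u3 - u3*u1)"
    using assms(4) unfolding all_congruent_def by (elim conjE) algebra
  moreover have "p dvd (u1 - u2) * (v1^2 + v2^2 + v3^2 - v1*v2 - v2*v3 - v3*v1)"
    using assms(4) unfolding all_congruent_def by (elim conjE) algebra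
  ultimately show ?thesis
    using assms(1-3) by (auto simp: equilateral_def pairwise_incongruent_def prime_dvd_mult_iff)
qed

lemma midpoints_if_sum_coincidences:
  fixes p u1 u2 u3 v1 v2 v3 :: int
  assumes "prime p" "pairwise_incongruent p u1 u2 u3" "pairwise_incongruent p v1 v2 v3"
    and "\<not> pairwise_incongruent p (u1*v1 + u2*v2 + u3*v3) (u1*v2 + u2*v3 + u3*v1) (u1*v3 + u2*v1 + u3*v2)"
    and "\<not> pairwise_incongruent p (u1*v1 + u2*v3 + u3*v2) (u1*v3 + u2*v2 + u3*v1) (u1*v2 + u2*v1 + u3*v3)"
  shows "has_midpoint p u1 u2 u3 \<and> has_midpoint p v1 v2 v3"
proof -
  note coincidences = assms(4,5)[unfolded pairwise_incongruent_def de_Morgan_conj not_not]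
  \<comment> \<open>In each of the nine cases the two coincidences are linear in the differences of one
    triple; eliminating them leaves a unit times a midpoint condition for the other triple.\<close>
  have "p dvd (v2 - v3) * ((u1 - u2) * (u1 - u3) * (u2 - u3))
      * ((2*u1 - u2 - u3) * (2*u2 - u1 - u3) * (2*u3 - u1 - u2))"
    using coincidences by (elim disjE) algebra+
  moreover have "p dvd (u2 - u3) * ((v1 - v2) * (v1 - v3) * (v2 - v3))
      * ((2*v1 - v2 - v3) * (2*v2 - v1 - v3) * (2*v3 - v1 - v2))"
    using coincidences by (elim disjE) algebra+
  ultimately show ?thesis
    using assms(1-3) not_dvd_pairwise_differences
    by (auto simp: has_midpoint_def pairwise_incongruent_def prime_dvd_mult_iff)
qed

lemma odd_sums_incongruent_if_even_sums_congruent: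
  fixes p u1 u2 u3 v1 v2 v3 :: int
  assumes "prime p" "p > 3" "pairwise_incongruent p u1 u2 u3" "pairwise_incongruent p v1 v2 v3"
    and "all_congruent p (u1*v1 + u2*v2 + u3*v3) (u1*v2 + u2*v3 + u3*v1) (u1*v3 + u2*v1 + u3*v2)"
  shows "pairwise_incongruent p (u1*v1 + u2*v3 + u3*v2) (u1*v3 + u2*v2 + u3*v1) (u1*v2 + u2*v1 + u3*v3)"
proof (rule ccontr)
  assume "\<not> ?thesis"
  moreover have "\<not> pairwise_incongruent p (u1*v1 + u2*v2 + u3*v3) (u1*v2 + u2*v3 + u3*v1) (u1*v3 + u2*v1 + u3*v2)"
    using assms(5) by (simp add: all_congruent_def pairwise_incongruent_def)
  ultimately have "has_midpoint p u1 u2 u3"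
    using midpoints_if_sum_coincidences assms(1,3,4) by blast
  moreover have "equilateral p u1 u2 u3"
    using equilateral_if_even_sums_congruent assms(1,3-5) by blast
  ultimately show False
    using not_midpoint_if_equilateral assms(1-3) by blast
qed

lemma card_three:
  shows "card {x, y, z} = 3 \<longleftrightarrow> x \<noteq> y \<and> x \<noteq> z \<and> y \<noteq> z"
    and "card {x, y, z} = 1 \<longleftrightarrow> x = y \<and> x = z"
    and "1 \<le> card {x, y, z}" "card {x, y, z} \<le> 3"
  by (auto simp: card_insert_if)

lemma card_mod_image_three:
  fixes p a b c :: int
  shows "card ((\<lambda>t. t mod p) ` {a, b, c}) = 3 \<longleftrightarrow> pairwise_incongruent p a b c"
    and "card ((\<lambda>t. t mod p) ` {a, b, c}) = 1 \<longleftrightarrow> all_congruent p a b c"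
  by (simp_all only: image_insert image_empty card_three pairwise_incongruent_def
      all_congruent_def mod_eq_dvd_iff)

lemma prime_divisor_of_2_5_7_smooth:
  fixes p :: int
  assumes "prime p" "p dvd 2^i * 5^j * 7^k"
  shows "p \<le> 7"
proof -
  have "p dvd 2 \<or> p dvd 5 \<or> p dvd 7"
    using assms by (auto simp: prime_dvd_mult_iff dest: prime_dvd_power)
  then show ?thesis
    by (auto dest: zdvd_imp_le)
qed

text \<open>
  For a four-element set S, 4 s - \<Sum>S is four times the deviation of s from the mean of S.
  Power sums of these deviations are translation invariant, so modulo p they can be computed
  from any representatives of the residues.
\<close>
definition centered_power_sum :: "nat \<Rightarrow> int set \<Rightarrow> int" where
  "centered_power_sum k S = (\<Sum>s\<in>S. (4 * s - \<Sum> S) ^ k)"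

definition centered_power_sum4 :: "nat \<Rightarrow> int \<Rightarrow> int \<Rightarrow> int \<Rightarrow> int \<Rightarrow> int" where
  "centered_power_sum4 k w1 w2 w3 w4 =
     (4*w1 - (w1 + w2 + w3 + w4))^k + (4*w2 - (w1 + w2 + w3 + w4))^k
   + (4*w3 - (w1 + w2 + w3 + w4))^k + (4*w4 - (w1 + w2 + w3 + w4))^k"

lemma centered_power_sum_cong:
  fixes p z1 z2 z3 z4 w1 w2 w3 w4 :: int
  assumes "card {z1, z2, z3, z4} = 4"
    and "[z1 = w1] (mod p)" "[z2 = w2] (mod p)" "[z3 = w3] (mod p)" "[z4 = w4] (mod p)"
  shows "[centered_power_sum k {z1, z2, z3, z4} = centered_power_sum4 k w1 w2 w3 w4] (mod p)"
proof -
  have "distinct [z1, z2, z3, z4]"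
    by (rule card_distinct) (use assms(1) in simp)
  then have "centered_power_sum k {z1, z2, z3, z4} = centered_power_sum4 k z1 z2 z3 z4"
    by (simp add: centered_power_sum_def centered_power_sum4_def add.assoc)
  then show ?thesis
    unfolding centered_power_sum4_def
    by (simp only:) (intro cong_add cong_pow cong_diff cong_mult cong_refl assms(2-5))
qed

lemma centered_power_sums_AP:
  fixes p :: int and S :: "int set"
  assumes "is_AP_mod p S" "card S = 4"
  shows "\<exists>d. \<not> p dvd d \<and> [centered_power_sum 2 S = 80 * d^2] (mod p)
           \<and> [centered_power_sum 4 S = 2624 * d^4] (mod p)"
proof -
  obtain a d where d: "d mod p \<noteq> 0" and S: "S = {(a + int i * d) mod p | i. i < 4}"
    using assms unfolding is_AP_mod_def by auto
  have "{i::nat. i < 4} = {0, 1, 2, 3}"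
    by auto
  then have S4: "S = {a mod p, (a + d) mod p, (a + 2*d) mod p, (a + 3*d) mod p}"
    unfolding S setcompr_eq_image by simp
  have "[centered_power_sum k S = centered_power_sum4 k a (a + d) (a + 2*d) (a + 3*d)] (mod p)" for k
    unfolding S4 by (rule centered_power_sum_cong) (use assms(2) S4 in \<open>simp_all add: cong_def\<close>)
  moreover have "centered_power_sum4 2 a (a + d) (a + 2*d) (a + 3*d) = 80 * d^2"
    "centered_power_sum4 4 a (a + d) (a + 2*d) (a + 3*d) = 2624 * d^4"
    unfolding centered_power_sum4_def by algebra+
  moreover have "\<not> p dvd d"
    using d by (simp add: dvd_eq_mod_eq_0)
  ultimately show ?thesis
    by metis
qed

lemma not_AP_if_centered_power_sum_2_vanishes:
  fixes p :: int and S :: "int set"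
  assumes "prime p" "p > 7" "card S = 4" "p dvd centered_power_sum 2 S"
  shows "\<not> is_AP_mod p S"
proof
  assume "is_AP_mod p S"
  then obtain d where "\<not> p dvd d" "[centered_power_sum 2 S = 80 * d^2] (mod p)"
    using centered_power_sums_AP assms(3) by blast
  with assms(4) have "p dvd 2^4 * 5^1 * 7^0 * d^2"
    by (simp add: cong_dvd_iff)
  with assms(1,2) \<open>\<not> p dvd d\<close> show False
    using prime_divisor_of_2_5_7_smooth[of p 4 1 0] by (auto simp: prime_dvd_mult_iff prime_dvd_power_iff)
qed

lemma not_AP_plus_minus_one_two:
  fixes p K m :: int
  assumes "prime p" "p > 7" "\<not> p dvd m"
  shows "\<not> is_AP_mod p ((\<lambda>t. t mod p) ` {K - 2*m, K - m, K + m, K + 2*m})" (is "\<not> is_AP_mod p ?S")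
proof
  assume "is_AP_mod p ?S"
  have "\<not> p dvd m" "\<not> p dvd 2*m" "\<not> p dvd 3*m" "\<not> p dvd 4*m"
    using assms by (auto simp: prime_dvd_mult_iff zdvd_not_zless)
  then have "card ?S = 4"
    by (simp add: card_insert_if mod_eq_dvd_iff)
  then obtain d where d: "\<not> p dvd d" "[centered_power_sum 2 ?S = 80 * d^2] (mod p)"
    "[centered_power_sum 4 ?S = 2624 * d^4] (mod p)"
    using centered_power_sums_AP \<open>is_AP_mod p ?S\<close> by blast
  have cong: "[centered_power_sum k ?S = centered_power_sum4 k (K - 2*m) (K - m) (K + m) (K + 2*m)] (mod p)"
    for k
    unfolding image_insert image_empty
    by (rule centered_power_sum_cong) (use \<open>card ?S = 4\<close> in \<open>simp_all add: cong_def\<close>)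
  have "centered_power_sum4 2 (K - 2*m) (K - m) (K + m) (K + 2*m) = 160 * m^2"
    "centered_power_sum4 4 (K - 2*m) (K - m) (K + m) (K + 2*m) = 8704 * m^4"
    unfolding centered_power_sum4_def by algebra+
  then have "[80 * d^2 = 160 * m^2] (mod p)" "[2624 * d^4 = 8704 * m^4] (mod p)"
    using cong_trans[OF cong_sym[OF d(2)] cong[of 2]] cong_trans[OF cong_sym[OF d(3)] cong[of 4]]
    by simp_all
  \<comment> \<open>eliminate d^4 using the square of the first congruence\<close>
  then have "p dvd 2^16 * 5^2 * 7^1 * m^4"
    unfolding cong_iff_dvd_diff by algebra
  with assms show False
    using prime_divisor_of_2_5_7_smooth[of p 16 2 1] by (auto simp: prime_dvd_mult_iff prime_dvd_power_iff)
qed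

lemma not_AP_if_even_sums_congruent:
  fixes p u1 u2 u3 v1 v2 v3 :: int
  assumes "prime p" "p > 7" "pairwise_incongruent p u1 u2 u3" "pairwise_incongruent p v1 v2 v3"
    and "all_congruent p (u1*v1 + u2*v2 + u3*v3) (u1*v2 + u2*v3 + u3*v1) (u1*v3 + u2*v1 + u3*v2)"
  shows "\<not> is_AP_mod p ((\<lambda>t. t mod p) ` perm_sums u1 u2 u3 v1 v2 v3)"
proof -
  define a b1 b2 b3 where "a = u1*v1 + u2*v2 + u3*v3"
    and "b1 = u1*v1 + u2*v3 + u3*v2" and "b2 = u1*v3 + u2*v2 + u3*v1" and "b3 = u1*v2 + u2*v1 + u3*v3"
  have "(u1*v2 + u2*v3 + u3*v1) mod p = a mod p" "(u1*v3 + u2*v1 + u3*v2) mod p = a mod p"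
    using assms(5) by (simp_all add: all_congruent_def a_def mod_eq_dvd_iff dvd_diff_commute)
  then have S: "(\<lambda>t. t mod p) ` perm_sums u1 u2 u3 v1 v2 v3 = {a mod p, b1 mod p, b2 mod p, b3 mod p}"
    by (auto simp: perm_sums_def a_def b1_def b2_def b3_def)
  have "pairwise_incongruent p b1 b2 b3"
    unfolding b1_def b2_def b3_def
    using odd_sums_incongruent_if_even_sums_congruent assms by simp
  moreover have "\<not> p dvd (a - b)" if "b \<in> {b1, b2, b3}" for b
    using even_odd_sums_incongruent[OF assms(1,3,4)] that by (simp add: a_def b1_def b2_def b3_def)
  ultimately have card: "card {a mod p, b1 mod p, b2 mod p, b3 mod p} = 4"
    by (simp add: card_insert_if mod_eq_dvd_iff pairwise_incongruent_def)
  have "p dvd centered_power_sum4 2 a b1 b2 b3"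
    using assms(5) unfolding centered_power_sum4_def all_congruent_def a_def b1_def b2_def b3_def
    by (elim conjE) algebra
  moreover have "[centered_power_sum 2 {a mod p, b1 mod p, b2 mod p, b3 mod p}
      = centered_power_sum4 2 a b1 b2 b3] (mod p)"
    by (rule centered_power_sum_cong[OF card]) (simp_all add: cong_def)
  ultimately have "p dvd centered_power_sum 2 {a mod p, b1 mod p, b2 mod p, b3 mod p}"
    by (simp add: cong_dvd_iff)
  then show ?thesis
    unfolding S using not_AP_if_centered_power_sum_2_vanishes assms(1,2) card by blast
qed

lemma not_AP_if_last_midpoints:
  fixes p u1 u2 u3 v1 v2 v3 :: int
  assumes "prime p" "p > 7" "\<not> p dvd (u1 - u3)" "\<not> p dvd (v1 - v3)"
    and "p dvd (2*u3 - u1 - u2)" "p dvd (2*v3 - v1 - v2)"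
  shows "\<not> is_AP_mod p ((\<lambda>t. t mod p) ` perm_sums u1 u2 u3 v1 v2 v3)"
proof -
  obtain k l where "2*u3 - u1 - u2 = p*k" and "2*v3 - v1 - v2 = p*l"
    using assms(5,6) by (elim dvdE)
  then have u2: "u2 = 2*u3 - u1 - p*k" and v2: "v2 = 2*v3 - v1 - p*l"
    by linarith+
  define K m where "K = 3 * u3 * v3" and "m = (u1 - u3) * (v1 - v3)"
  have "(u1*v1 + u2*v2 + u3*v3) mod p = (K + 2*m) mod p"
    "(u1*v2 + u2*v3 + u3*v1) mod p = (K - m) mod p"
    "(u1*v3 + u2*v1 + u3*v2) mod p = (K - m) mod p"
    "(u1*v1 + u2*v3 + u3*v2) mod p = (K + m) mod p"
    "(u1*v3 + u2*v2 + u3*v1) mod p = (K + m) mod p"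
    "(u1*v2 + u2*v1 + u3*v3) mod p = (K - 2*m) mod p"
    unfolding mod_eq_dvd_iff K_def m_def u2 v2 by algebra+
  then have "(\<lambda>t. t mod p) ` perm_sums u1 u2 u3 v1 v2 v3
      = (\<lambda>t. t mod p) ` {K - 2*m, K - m, K + m, K + 2*m}"
    by (auto simp: perm_sums_def)
  moreover have "\<not> p dvd m"
    using assms(1,3,4) by (simp add: m_def prime_dvd_mult_iff)
  ultimately show ?thesis
    using not_AP_plus_minus_one_two assms(1,2) by simp
qed

lemma midpoint_last_wlog:
  fixes p u1 u2 u3 :: int
  assumes "pairwise_incongruent p u1 u2 u3" "has_midpoint p u1 u2 u3"
  obtains a b c where "\<And>v1 v2 v3. perm_sums a b c v1 v2 v3 = perm_sums u1 u2 u3 v1 v2 v3"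
    and "\<not> p dvd (a - c)" and "p dvd (2*c - a - b)"
proof -
  consider "p dvd (2*u1 - u2 - u3)" | "p dvd (2*u2 - u1 - u3)" | "p dvd (2*u3 - u1 - u2)"
    using assms(2) unfolding has_midpoint_def by blast
  then show ?thesis
  proof cases
    case 1
    show ?thesis
    proof (rule that[of u3 u2 u1])
      show "perm_sums u3 u2 u1 v1 v2 v3 = perm_sums u1 u2 u3 v1 v2 v3" for v1 v2 v3
        by (rule perm_sums_swap(2))
      show "\<not> p dvd (u3 - u1)"
        using assms(1) by (simp add: pairwise_incongruent_def dvd_diff_commute)
      show "p dvd (2*u1 - u3 - u2)"
        using 1 by (simp add: algebra_simps)
    qed
  next
    case 2
    show ?thesis
    proof (rule that[of u1 u3 u2])
      show "perm_sums u1 u3 u2 v1 v2 v3 = perm_sums u1 u2 u3 v1 v2 v3" for v1 v2 v3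
        by (rule perm_sums_swap(3))
      show "\<not> p dvd (u1 - u2)"
        using assms(1) by (simp add: pairwise_incongruent_def)
      show "p dvd (2*u2 - u1 - u3)"
        using 2 .
    qed
  next
    case 3
    then show ?thesis
      using assms(1) by (intro that[of u1 u2 u3]) (auto simp: pairwise_incongruent_def)
  qed
qed

lemma not_AP_if_midpoints:
  fixes p u1 u2 u3 v1 v2 v3 :: int
  assumes "prime p" "p > 7" "pairwise_incongruent p u1 u2 u3" "pairwise_incongruent p v1 v2 v3"
    and "has_midpoint p u1 u2 u3" "has_midpoint p v1 v2 v3"
  shows "\<not> is_AP_mod p ((\<lambda>t. t mod p) ` perm_sums u1 u2 u3 v1 v2 v3)"
proof -
  obtain a b c where u: "\<And>v1 v2 v3. perm_sums a b c v1 v2 v3 = perm_sums u1 u2 u3 v1 v2 v3"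
    and "\<not> p dvd (a - c)" "p dvd (2*c - a - b)"
    using midpoint_last_wlog assms(3,5) by blast
  obtain a' b' c' where v: "\<And>u1 u2 u3. perm_sums a' b' c' u1 u2 u3 = perm_sums v1 v2 v3 u1 u2 u3"
    and "\<not> p dvd (a' - c')" "p dvd (2*c' - a' - b')"
    using midpoint_last_wlog assms(4,6) by blast
  have "perm_sums u1 u2 u3 v1 v2 v3 = perm_sums a b c v1 v2 v3"
    by (rule u[symmetric])
  also have "\<dots> = perm_sums v1 v2 v3 a b c"
    by (rule perm_sums_commute[symmetric])
  also have "\<dots> = perm_sums a' b' c' a b c"
    by (rule v[symmetric])
  also have "\<dots> = perm_sums a b c a' b' c'"
    by (rule perm_sums_commute)
  finally show ?thesis
    using not_AP_if_last_midpoints assms(1,2) \<open>\<not> p dvd (a - c)\<close> \<open>\<not> p dvd (a' - c')\<close>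
      \<open>p dvd (2*c - a - b)\<close> \<open>p dvd (2*c' - a' - b')\<close> by simp
qed

lemma card_mod_perm_sums:
  fixes p u1 u2 u3 v1 v2 v3 :: int
  assumes "prime p" "p > 3" "pairwise_incongruent p u1 u2 u3" "pairwise_incongruent p v1 v2 v3"
  defines "S \<equiv> (\<lambda>t. t mod p) ` perm_sums u1 u2 u3 v1 v2 v3"
  shows "4 \<le> card S"
    and "card S = 4 \<Longrightarrow> (has_midpoint p u1 u2 u3 \<and> has_midpoint p v1 v2 v3)
      \<or> all_congruent p (u1*v1 + u2*v2 + u3*v3) (u1*v2 + u2*v3 + u3*v1) (u1*v3 + u2*v1 + u3*v2)
      \<or> all_congruent p (u1*v1 + u2*v3 + u3*v2) (u1*v3 + u2*v2 + u3*v1) (u1*v2 + u2*v1 + u3*v3)"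
    (is "_ \<Longrightarrow> ?cases")
proof -
  let ?A = "(\<lambda>t. t mod p) ` {u1*v1 + u2*v2 + u3*v3, u1*v2 + u2*v3 + u3*v1, u1*v3 + u2*v1 + u3*v2}"
  let ?B = "(\<lambda>t. t mod p) ` {u1*v1 + u2*v3 + u3*v2, u1*v3 + u2*v2 + u3*v1, u1*v2 + u2*v1 + u3*v3}"
  have union: "S = ?A \<union> ?B"
    unfolding S_def perm_sums_def image_Un[symmetric] by (simp only: Un_insert_left Un_empty_left)
  have disjoint: "?A \<inter> ?B = {}"
    using even_odd_sums_incongruent[OF assms(1,3,4)] by (fastforce simp: mod_eq_dvd_iff)
  have card: "card S = card ?A + card ?B"
    unfolding union by (intro card_Un_disjoint finite_imageI finite.intros disjoint)
  have A1: "card ?B = 3" if "card ?A = 1"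
    using that odd_sums_incongruent_if_even_sums_congruent[OF assms(1-4)]
    by (simp only: card_mod_image_three)
  have v': "pairwise_incongruent p v1 v3 v2"
    using assms(4) pairwise_incongruent_swap23 by blast
  \<comment> \<open>the odd sums for v1 v2 v3 are the even sums for v1 v3 v2\<close>
  have B1: "card ?A = 3" if "card ?B = 1"
    using that odd_sums_incongruent_if_even_sums_congruent[OF assms(1-3) v']
    by (simp only: card_mod_image_three)
  have bounds: "1 \<le> card ?A" "card ?A \<le> 3" "1 \<le> card ?B" "card ?B \<le> 3"
    by (simp_all only: image_insert image_empty card_three)
  show "4 \<le> card S"
    using card A1 B1 bounds by linarith
  assume "card S = 4"
  then consider "card ?A = 1" | "card ?B = 1" | "card ?A \<noteq> 3" "card ?B \<noteq> 3"
    using card bounds by linarith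
  then show ?cases
  proof cases
    case 1
    then show ?thesis
      unfolding card_mod_image_three by blast
  next
    case 2
    then show ?thesis
      unfolding card_mod_image_three by blast
  next
    case 3
    then show ?thesis
      using midpoints_if_sum_coincidences[OF assms(1,3,4)] unfolding card_mod_image_three by blast
  qed
qed

lemma equilateral_not_AP_if_sums_collapse:
  fixes p u1 u2 u3 v1 v2 v3 :: int
  assumes "prime p" "p > 7" "pairwise_incongruent p u1 u2 u3" "pairwise_incongruent p v1 v2 v3"
    and "all_congruent p (u1*v1 + u2*v2 + u3*v3) (u1*v2 + u2*v3 + u3*v1) (u1*v3 + u2*v1 + u3*v2)
      \<or> all_congruent p (u1*v1 + u2*v3 + u3*v2) (u1*v3 + u2*v2 + u3*v1) (u1*v2 + u2*v1 + u3*v3)"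
  shows "equilateral p u1 u2 u3 \<and> equilateral p v1 v2 v3
    \<and> \<not> is_AP_mod p ((\<lambda>t. t mod p) ` perm_sums u1 u2 u3 v1 v2 v3)"
  using assms(5)
proof
  assume "all_congruent p (u1*v1 + u2*v2 + u3*v3) (u1*v2 + u2*v3 + u3*v1) (u1*v3 + u2*v1 + u3*v2)"
  then show ?thesis
    using equilateral_if_even_sums_congruent[OF assms(1,3,4)]
      not_AP_if_even_sums_congruent[OF assms(1-4)] by blast
next
  assume "all_congruent p (u1*v1 + u2*v3 + u3*v2) (u1*v3 + u2*v2 + u3*v1) (u1*v2 + u2*v1 + u3*v3)"
  moreover have v': "pairwise_incongruent p v1 v3 v2"
    using assms(4) pairwise_incongruent_swap23 by blast
  moreover have "equilateral p v1 v3 v2 \<longleftrightarrow> equilateral p v1 v2 v3"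
    unfolding equilateral_def by (rule arg_cong[where f = "(dvd) p"]) algebra
  ultimately show ?thesis
    using equilateral_if_even_sums_congruent[OF assms(1,3) v']
      not_AP_if_even_sums_congruent[OF assms(1-3) v'] perm_sums_swap(1) by auto
qed

lemma permutes_three_if:
  fixes a b c :: nat
  assumes "a \<in> {1, 2, 3}" "b \<in> {1, 2, 3}" "c \<in> {1, 2, 3}" "a \<noteq> b" "a \<noteq> c" "b \<noteq> c"
  shows "(\<lambda>i. if i = 1 then a else if i = 2 then b else if i = 3 then c else i) permutes {1, 2, 3}"
  using assms by (intro bij_imp_permutes) (auto simp: bij_betw_def inj_on_def)

lemma seq_prod_set_eq:
  "seq_prod_set p u v = (\<lambda>t. t mod p) ` perm_sums (u 1) (u 2) (u 3) (v 1) (v 2) (v 3)"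
proof -
  have sum: "(\<Sum>i\<in>{1,2,3}. u i * v (\<sigma> i)) = u 1 * v (\<sigma> 1) + u 2 * v (\<sigma> 2) + u 3 * v (\<sigma> 3)"
    for \<sigma> :: "nat \<Rightarrow> nat"
    by (simp add: add.assoc)
  have realized: "(u 1 * v a + u 2 * v b + u 3 * v c) mod p \<in> seq_prod_set p u v"
    if abc: "a \<in> {1, 2, 3}" "b \<in> {1, 2, 3}" "c \<in> {1, 2, 3}" "a \<noteq> b" "a \<noteq> c" "b \<noteq> c"
    for a b c
  proof -
    let ?\<sigma> = "\<lambda>i. if i = 1 then a else if i = 2 then b else if i = 3 then c else i"
    show ?thesis
      unfolding seq_prod_set_def
    proof (intro CollectI exI[where x = ?\<sigma>] conjI)
      show "?\<sigma> permutes {1, 2, 3}"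
        by (rule permutes_three_if[OF abc])
      show "(u 1 * v a + u 2 * v b + u 3 * v c) mod p = (\<Sum>i\<in>{1,2,3}. u i * v (?\<sigma> i)) mod p"
        unfolding sum by simp
    qed
  qed
  show ?thesis
  proof (intro equalityI subsetI)
    fix t
    assume "t \<in> seq_prod_set p u v"
    then obtain \<sigma> where \<sigma>: "\<sigma> permutes {1, 2, 3}" and t: "t = (\<Sum>i\<in>{1,2,3}. u i * v (\<sigma> i)) mod p"
      unfolding seq_prod_set_def by blast
    have "\<sigma> 1 \<in> {1, 2, 3}" "\<sigma> 2 \<in> {1, 2, 3}" "\<sigma> 3 \<in> {1, 2, 3}"
      using permutes_in_image[OF \<sigma>] by simp_all
    moreover have "\<sigma> 1 \<noteq> \<sigma> 2" "\<sigma> 1 \<noteq> \<sigma> 3" "\<sigma> 2 \<noteq> \<sigma> 3"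
      using permutes_inj[OF \<sigma>] by (simp_all add: inj_eq)
    ultimately show "t \<in> (\<lambda>t. t mod p) ` perm_sums (u 1) (u 2) (u 3) (v 1) (v 2) (v 3)"
      unfolding t sum perm_sums_def by auto
  next
    fix t
    assume "t \<in> (\<lambda>t. t mod p) ` perm_sums (u 1) (u 2) (u 3) (v 1) (v 2) (v 3)"
    then show "t \<in> seq_prod_set p u v"
      using realized[of 1 2 3] realized[of 2 3 1] realized[of 3 1 2]
        realized[of 1 3 2] realized[of 3 2 1] realized[of 2 1 3]
      unfolding perm_sums_def by auto
  qed
qed

lemma is_AP_mod_three:
  fixes p a b c :: int
  assumes "a \<in> residues_set p" "b \<in> residues_set p" "c \<in> residues_set p"
    and "a \<noteq> b" "a \<noteq> c" "b \<noteq> c" "p dvd (2*b - a - c)"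
  shows "is_AP_mod p {a, b, c}"
  unfolding is_AP_mod_def
proof (intro exI conjI)
  have range: "0 \<le> a" "a < p" "0 \<le> b" "b < p" "0 \<le> c" "c < p"
    using assms(1-3) by (auto simp: residues_set_def)
  show "(b - a) mod p \<noteq> 0"
    using pairwise_incongruent_residues[OF assms(1-6)]
    by (simp add: pairwise_incongruent_def mod_eq_0_iff_dvd dvd_diff_commute)
  have "(a + 2 * (b - a)) mod p = c mod p"
    unfolding mod_eq_dvd_iff using assms(7) by algebra
  moreover have "{i::nat. i < card {a, b, c}} = {0, 1, 2}"
    using assms(4-6) by auto
  ultimately show "{a, b, c} = {(a + int i * (b - a)) mod p | i. i < card {a, b, c}}"
    unfolding setcompr_eq_image using range by simp
qed

lemma is_AP_mod_if_has_midpoint: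
  fixes p a b c :: int
  assumes "a \<in> residues_set p" "b \<in> residues_set p" "c \<in> residues_set p"
    and "a \<noteq> b" "a \<noteq> c" "b \<noteq> c" "has_midpoint p a b c"
  shows "is_AP_mod p {a, b, c}"
proof -
  consider "p dvd (2*a - b - c)" | "p dvd (2*b - a - c)" | "p dvd (2*c - a - b)"
    using assms(7) unfolding has_midpoint_def by blast
  then show ?thesis
  proof cases
    case 1
    then have "is_AP_mod p {b, a, c}"
      using assms(1-6) by (intro is_AP_mod_three) auto
    then show ?thesis
      by (simp add: insert_commute)
  next
    case 2
    then show ?thesis
      using assms(1-6) by (intro is_AP_mod_three) auto
  next
    case 3
    then have "is_AP_mod p {a, c, b}"
      using assms(1-6) by (intro is_AP_mod_three) auto
    then show ?thesis
      by (simp add: insert_commute)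
  qed
qed

lemma equilateral_affine_normal_form:
  fixes p a b c :: int
  assumes "prime p" "\<not> p dvd (b - c)" "equilateral p a b c"
  obtains \<alpha> \<beta> x where "\<alpha> mod p \<noteq> 0" "x \<in> residues_set p" "(x^2 - x + 1) mod p = 0"
    and "affine_mod p \<alpha> \<beta> ` {a, b, c} = {0, 1, x}"
proof -
  have "p > 1"
    using assms(1) by (rule prime_gt_1_int)
  have "coprime (b - c) p"
    using prime_imp_coprime[OF assms(1,2)] by (simp add: coprime_commute)
  then obtain \<alpha> where \<alpha>: "[(b - c) * \<alpha> = 1] (mod p)"
    using cong_solve_coprime_int by blast
  then have inverse: "p dvd (b - c) * \<alpha> - 1"
    by (simp add: cong_iff_dvd_diff)
  have inverse_mod: "((b - c) * \<alpha>) mod p = 1"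
    using \<alpha> \<open>p > 1\<close> by (simp add: cong_def)
  define x where "x = (\<alpha> * (a - c)) mod p"
  have "affine_mod p \<alpha> (- \<alpha> * c) ` {a, b, c} = {x, 1, 0}"
    using inverse_mod by (simp add: affine_mod_def x_def algebra_simps)
  moreover have "\<alpha> mod p \<noteq> 0"
  proof
    assume "\<alpha> mod p = 0"
    then have "p dvd (b - c) * \<alpha>"
      by (simp add: mod_eq_0_iff_dvd)
    then have "p dvd (b - c) * \<alpha> - ((b - c) * \<alpha> - 1)"
      using inverse by (rule dvd_diff)
    then show False
      using \<open>p > 1\<close> by (simp add: zdvd1_eq)
  qed
  moreover have "x \<in> residues_set p"
    using \<open>p > 1\<close> by (simp add: x_def residues_set_def)
  moreover have "p dvd x - \<alpha> * (a - c)"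
    unfolding x_def by (simp add: mod_eq_dvd_iff[symmetric])
  then have "p dvd x^2 - x + 1"
    using inverse assms(3) unfolding equilateral_def by algebra
  ultimately show ?thesis
    by (intro that[of \<alpha> x "- \<alpha> * c"]) (auto simp: mod_eq_0_iff_dvd insert_commute)
qed

lemma affine_mod_reflect_image:
  fixes p \<alpha> \<beta> y :: int and T :: "int set"
  assumes "p > 1" "affine_mod p \<alpha> \<beta> ` T = {0, 1, y}"
  shows "affine_mod p (- \<alpha>) (1 - \<beta>) ` T = {0, 1, (1 - y) mod p}"
proof -
  have "affine_mod p (- \<alpha>) (1 - \<beta>) z = (1 - affine_mod p \<alpha> \<beta> z) mod p" for z
    unfolding affine_mod_def by (simp add: mod_diff_right_eq algebra_simps)
  then have "affine_mod p (- \<alpha>) (1 - \<beta>) ` T = (\<lambda>w. (1 - w) mod p) ` affine_mod p \<alpha> \<beta> ` T"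
    by (simp add: image_image)
  then show ?thesis
    using assms by (auto simp: insert_commute)
qed

lemma equilateral_pair_normal_forms:
  fixes p u1 u2 u3 v1 v2 v3 :: int
  assumes "prime p" "p > 3" "\<not> p dvd (u2 - u3)" "\<not> p dvd (v2 - v3)"
    and "equilateral p u1 u2 u3" "equilateral p v1 v2 v3"
  shows "\<exists>\<alpha> \<beta> \<gamma> \<delta> x y.
    \<alpha> mod p \<noteq> 0 \<and> \<gamma> mod p \<noteq> 0 \<and>
    x \<in> residues_set p \<and> y \<in> residues_set p \<and> x \<noteq> y \<and>
    (x^2 - x + 1) mod p = 0 \<and> (y^2 - y + 1) mod p = 0 \<and>
    affine_mod p \<alpha> \<beta> ` {u1, u2, u3} = {0, 1, x} \<and>
    affine_mod p \<gamma> \<delta> ` {v1, v2, v3} = {0, 1, y}"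
proof -
  have "p > 1"
    using assms(2) by simp
  obtain \<alpha> \<beta> x where x: "\<alpha> mod p \<noteq> 0" "x \<in> residues_set p" "(x^2 - x + 1) mod p = 0"
    "affine_mod p \<alpha> \<beta> ` {u1, u2, u3} = {0, 1, x}"
    using equilateral_affine_normal_form[OF assms(1,3,5)] .
  obtain \<gamma> \<delta> y where y: "\<gamma> mod p \<noteq> 0" "y \<in> residues_set p" "(y^2 - y + 1) mod p = 0"
    "affine_mod p \<gamma> \<delta> ` {v1, v2, v3} = {0, 1, y}"
    using equilateral_affine_normal_form[OF assms(1,4,6)] .
  show ?thesis
  proof (cases "x = y")
    case False
    then show ?thesis
      using x y by (intro exI[of _ \<alpha>] exI[of _ \<beta>] exI[of _ \<gamma>] exI[of _ \<delta>] exI[of _ x] exI[of _ y] conjI)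
  next
    case True
    \<comment> \<open>replace y by the other root 1 - y of z^2 - z + 1\<close>
    define w where "w = (1 - y) mod p"
    have root: "p dvd y^2 - y + 1"
      using y(3) by (simp add: mod_eq_0_iff_dvd)
    have w: "p dvd w - (1 - y)"
      unfolding w_def by (simp add: mod_eq_dvd_iff[symmetric])
    have "p dvd w^2 - w + 1"
      using root w by algebra
    then have "(w^2 - w + 1) mod p = 0"
      by (simp add: mod_eq_0_iff_dvd)
    moreover have "x \<noteq> w"
    proof
      assume "x = w"
      have "y mod p = y"
        using y(2) by (simp add: residues_set_def)
      moreover have "w mod p = w"
        by (simp add: w_def)
      ultimately have "w mod p = y mod p"
        using \<open>x = w\<close> True by simp
      then have "p dvd w - y"
        by (simp only: mod_eq_dvd_iff)
      then have "p dvd 3"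
        using root w by algebra
      then show False
        using assms(2) prime_not_dvd_3 by blast
    qed
    moreover have "(- \<gamma>) mod p \<noteq> 0"
      using y(1) by (simp add: mod_eq_0_iff_dvd)
    moreover have "w \<in> residues_set p"
      using \<open>p > 1\<close> by (simp add: w_def residues_set_def)
    moreover have "affine_mod p (- \<gamma>) (1 - \<delta>) ` {v1, v2, v3} = {0, 1, w}"
      unfolding w_def by (rule affine_mod_reflect_image[OF \<open>p > 1\<close> y(4)])
    ultimately show ?thesis
      using x by (intro exI[of _ \<alpha>] exI[of _ \<beta>] exI[of _ "- \<gamma>"] exI[of _ "1 - \<delta>"] exI[of _ x]
          exI[of _ w] conjI)
  qed
qed

theorem lemma2p5:
  fixes p :: int and u v :: "nat \<Rightarrow> int"
  assumes "prime p" and "p > 3"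
    and "\<forall>i\<in>{1,2,3}. u i \<in> residues_set p" and "\<forall>i\<in>{1,2,3}. v i \<in> residues_set p"
    and "u 1 \<noteq> u 2" "u 1 \<noteq> u 3" "u 2 \<noteq> u 3"
    and "v 1 \<noteq> v 2" "v 1 \<noteq> v 3" "v 2 \<noteq> v 3"
  shows "card (seq_prod_set p u v) \<ge> 4 \<and>
    ((p > 7 \<and> card (seq_prod_set p u v) = 4) \<longrightarrow>
      \<not> is_AP_mod p (seq_prod_set p u v) \<and>
      ((is_AP_mod p {u 1, u 2, u 3} \<and> is_AP_mod p {v 1, v 2, v 3}) \<or>
       (\<exists>\<alpha> \<beta> \<gamma> \<delta> x y.
          \<alpha> mod p \<noteq> 0 \<and> \<gamma> mod p \<noteq> 0 \<and>
          x \<in> residues_set p \<and> y \<in> residues_set p \<and> x \<noteq> y \<and>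
          (x^2 - x + 1) mod p = 0 \<and> (y^2 - y + 1) mod p = 0 \<and>
          affine_mod p \<alpha> \<beta> ` {u 1, u 2, u 3} = {0, 1, x} \<and>
          affine_mod p \<gamma> \<delta> ` {v 1, v 2, v 3} = {0, 1, y})))"
proof -
  have u: "pairwise_incongruent p (u 1) (u 2) (u 3)" and v: "pairwise_incongruent p (v 1) (v 2) (v 3)"
    using assms(3-10) by (simp_all add: pairwise_incongruent_residues)
  then have "\<not> p dvd (u 2 - u 3)" "\<not> p dvd (v 2 - v 3)"
    by (simp_all add: pairwise_incongruent_def)
  note equilateral_case = equilateral_pair_normal_forms[OF assms(1,2) this]
  note S = seq_prod_set_eq[of p u v]
  note card = card_mod_perm_sums[OF assms(1,2) u v, folded S]
  have shape: "(has_midpoint p (u 1) (u 2) (u 3) \<and> has_midpoint p (v 1) (v 2) (v 3))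
      \<or> (equilateral p (u 1) (u 2) (u 3) \<and> equilateral p (v 1) (v 2) (v 3)
         \<and> \<not> is_AP_mod p (seq_prod_set p u v))"
    if "p > 7" "card (seq_prod_set p u v) = 4"
    using card(2)[OF that(2)] equilateral_not_AP_if_sums_collapse[OF assms(1) that(1) u v]
    unfolding S by argo
  have midpoint_case: "\<not> is_AP_mod p (seq_prod_set p u v)
      \<and> is_AP_mod p {u 1, u 2, u 3} \<and> is_AP_mod p {v 1, v 2, v 3}"
    if "p > 7" "has_midpoint p (u 1) (u 2) (u 3)" "has_midpoint p (v 1) (v 2) (v 3)"
    using not_AP_if_midpoints[OF assms(1) that(1) u v that(2,3)]
      is_AP_mod_if_has_midpoint[OF _ _ _ assms(5-7) that(2)]
      is_AP_mod_if_has_midpoint[OF _ _ _ assms(8-10) that(3)] assms(3,4)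
    unfolding S by simp
  show ?thesis
    using card(1) shape midpoint_case equilateral_case by blast
qed

end
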